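(* There exists a constant $c>0$ such that for every integer $k\geq 2$ and every graph $G$ with $\operatorname{tw}(G)\geq ck^4\log^{5/2}(k)$, we have $\operatorname{tw}(G\times K_2)\geq k$.
   Context: $\operatorname{tw}$ denotes treewidth. The direct product $G \times H$ has vertex set $V(G)\times V(H)$, with $(a,v)(b,u)$ an edge iff $ab\in E(G)$ and $uv\in E(H)$; $K_2$ is the graph with two adjacent vertices. *)

theory Defs
  imports Complex_Main
begin

type_synonym 'a graph = "'a set \<times> ('a \<times> 'a) set"

definition verts :: "'a graph \<Rightarrow> 'a set" where "verts G = fst G"
definition edges :: "'a graph \<Rightarrow> ('a \<times> 'a) set" where "edges G = snd G"

definition is_graph :: "'a graph \<Rightarrow> bool" where
  "is_graph G \<longleftrightarrow> finite (verts G) \<and> edges G \<subseteq> verts G \<times> verts G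
     \<and> (\<forall>x y. (x, y) \<in> edges G \<longrightarrow> (y, x) \<in> edges G)
     \<and> (\<forall>x. (x, x) \<notin> edges G)"

definition connected_in :: "'a graph \<Rightarrow> 'a set \<Rightarrow> bool" where
  "connected_in G S \<longleftrightarrow> (\<forall>x\<in>S. \<forall>y\<in>S. (x, y) \<in> (edges G \<inter> (S \<times> S))\<^sup>*)"

definition is_cycle :: "'a graph \<Rightarrow> 'a list \<Rightarrow> bool" where
  "is_cycle G vs \<longleftrightarrow> length vs \<ge> 3 \<and> distinct vs \<and> set vs \<subseteq> verts G
     \<and> (\<forall>i < length vs - 1. (vs ! i, vs ! Suc i) \<in> edges G)
     \<and> (last vs, hd vs) \<in> edges G"

definition is_tree :: "'a graph \<Rightarrow> bool" where
  "is_tree T \<longleftrightarrow> is_graph T \<and> verts T \<noteq> {} \<and> connected_in T (verts T)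
     \<and> (\<nexists>vs. is_cycle T vs)"

definition tree_decomposition :: "'a graph \<Rightarrow> nat graph \<Rightarrow> (nat \<Rightarrow> 'a set) \<Rightarrow> bool" where
  "tree_decomposition G T B \<longleftrightarrow> is_tree T
     \<and> (\<forall>t\<in>verts T. B t \<subseteq> verts G)
     \<and> (\<forall>v\<in>verts G. \<exists>t\<in>verts T. v \<in> B t)
     \<and> (\<forall>(u, v)\<in>edges G. \<exists>t\<in>verts T. u \<in> B t \<and> v \<in> B t)
     \<and> (\<forall>v\<in>verts G. connected_in T {t\<in>verts T. v \<in> B t})"

definition decomp_width :: "nat graph \<Rightarrow> (nat \<Rightarrow> 'a set) \<Rightarrow> nat" where
  "decomp_width T B = Max ((\<lambda>t. card (B t)) ` verts T) - 1"

definition treewidth :: "'a graph \<Rightarrow> nat" where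
  "treewidth G = (LEAST w. \<exists>T B. tree_decomposition G T B \<and> decomp_width T B = w)"

definition direct_product :: "'a graph \<Rightarrow> 'b graph \<Rightarrow> ('a \<times> 'b) graph" where
  "direct_product G H = (verts G \<times> verts H,
     {((a, v), (b, u)). (a, b) \<in> edges G \<and> (v, u) \<in> edges H})"

definition K2 :: "bool graph" where
  "K2 = (UNIV, {(x, y). x \<noteq> y})"

end

(*
  The proof gives a linear bound, tw(G) \<le> 8 tw(G \<times> K2) + 8, via balanced separators.  Every tree
  decomposition has a bag separating any weight set W in a balanced way, and conversely balanced
  separators of size s yield a decomposition with bags of size 4s + 1 by the usual recursion.  A
  balanced separator of G comes from two bags of a decomposition of the double cover G \<times> K2, projected
  to G: the first bag balances W \<times> {False}; if its projection fails to balance W, the heavy component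
  C of the remainder has a disconnected lift, so C is bipartite and embeds into G \<times> K2 via a
  2-colouring, and a bag balancing the embedded copy of W \<inter> C supplies the rest of the separator.
*)

theory Submission
  imports Defs
begin

section \<open>Graphs, walks and components\<close>

lemma verts_pair [simp]: "verts (V, E) = V" and edges_pair [simp]: "edges (V, E) = E"
  by (simp_all add: verts_def edges_def)

lemma graph_eta: "(verts G, edges G) = G"
  by (simp add: verts_def edges_def)

lemma is_graph_iff:
  "is_graph G \<longleftrightarrow> finite (verts G) \<and> edges G \<subseteq> verts G \<times> verts G \<and> sym (edges G)
     \<and> (\<forall>x. (x, x) \<notin> edges G)"
  unfolding is_graph_def sym_def by blast

lemma is_graph_edgeD: "is_graph G \<Longrightarrow> (x, y) \<in> edges G \<Longrightarrow> x \<in> verts G \<and> y \<in> verts G"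
  unfolding is_graph_def by blast

lemma is_graph_sym: "is_graph G \<Longrightarrow> sym (edges G)"
  unfolding is_graph_def sym_def by blast

lemma is_graph_irrefl: "is_graph G \<Longrightarrow> (x, x) \<notin> edges G"
  unfolding is_graph_def by blast

lemma rtrancl_restrict_mono:
  "(x, y) \<in> (E \<inter> S \<times> S)\<^sup>* \<Longrightarrow> S \<subseteq> S' \<Longrightarrow> E \<subseteq> E' \<Longrightarrow> (x, y) \<in> (E' \<inter> S' \<times> S')\<^sup>*"
  by (erule rtrancl_mono[THEN subsetD, rotated]) auto

lemma rtrancl_restrict_sym:
  assumes "sym E" "(x, y) \<in> (E \<inter> S \<times> S)\<^sup>*"
  shows "(y, x) \<in> (E \<inter> S \<times> S)\<^sup>*"
proof -
  have "sym (E \<inter> S \<times> S)" using assms(1) by (auto simp: sym_def)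
  then show ?thesis using assms(2) by (meson sym_rtrancl symD)
qed

lemma rtrancl_restrict_in: "(x, y) \<in> (E \<inter> S \<times> S)\<^sup>* \<Longrightarrow> x \<in> S \<Longrightarrow> y \<in> S"
  by (induction rule: rtrancl_induct) auto

lemma rtrancl_restrict_image:
  "(x, y) \<in> (E \<inter> S \<times> S)\<^sup>* \<Longrightarrow> (f x, f y) \<in> (map_prod f f ` E \<inter> f ` S \<times> f ` S)\<^sup>*"
proof (induction rule: rtrancl_induct)
  case (step y z)
  then have "(f y, f z) \<in> map_prod f f ` E \<inter> f ` S \<times> f ` S" by auto
  with step.IH show ?case by (rule rtrancl_into_rtrancl)
qed simp

lemma rtrancl_restrict_first_exit:
  assumes "(y, z) \<in> (E \<inter> S \<times> S)\<^sup>*" "y \<in> S'" "z \<notin> S'"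
  shows "\<exists>a b. (y, a) \<in> (E \<inter> S' \<times> S')\<^sup>* \<and> (a, b) \<in> E \<and> b \<in> S - S'"
  using assms
proof (induction rule: converse_rtrancl_induct)
  case (step y u)
  show ?case
  proof (cases "u \<in> S'")
    case True
    then obtain a b where ab: "(u, a) \<in> (E \<inter> S' \<times> S')\<^sup>*" "(a, b) \<in> E" "b \<in> S - S'"
      using step by blast
    have "(y, u) \<in> E \<inter> S' \<times> S'" using step True by auto
    then show ?thesis using ab by (meson converse_rtrancl_into_rtrancl)
  qed (use step in blast)
qed simp

lemma connected_in_singleton: "connected_in G {x}"
  unfolding connected_in_def by simp

lemma connected_in_mono_edges: "connected_in G S \<Longrightarrow> edges G \<subseteq> edges G' \<Longrightarrow> connected_in G' S"
  unfolding connected_in_def by (blast intro: rtrancl_restrict_mono)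

lemma connected_in_image: "connected_in (V, E) S \<Longrightarrow> connected_in (V', map_prod f f ` E) (f ` S)"
  unfolding connected_in_def using rtrancl_restrict_image by fastforce

lemma connected_in_Un:
  assumes "connected_in G S1" "connected_in G S2" "S1 \<inter> S2 \<noteq> {}"
  shows "connected_in G (S1 \<union> S2)"
  unfolding connected_in_def
proof (intro ballI)
  let ?R = "(edges G \<inter> (S1 \<union> S2) \<times> (S1 \<union> S2))\<^sup>*"
  obtain z where z: "z \<in> S1" "z \<in> S2" using assms(3) by blast
  have "(a, z) \<in> ?R \<and> (z, a) \<in> ?R" if "a \<in> S1 \<union> S2" for a
    using that z assms(1,2) unfolding connected_in_def by (blast intro: rtrancl_restrict_mono)
  then show "(x, y) \<in> ?R" if "x \<in> S1 \<union> S2" "y \<in> S1 \<union> S2" for x y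
    using that by (meson rtrancl_trans)
qed

definition component :: "('a \<times> 'a) set \<Rightarrow> 'a set \<Rightarrow> 'a \<Rightarrow> 'a set" where
  "component E S v = {y \<in> S. (v, y) \<in> (E \<inter> S \<times> S)\<^sup>*}"

lemma component_self: "v \<in> S \<Longrightarrow> v \<in> component E S v"
  unfolding component_def by simp

lemma component_subset: "component E S v \<subseteq> S"
  unfolding component_def by auto

lemma component_closed: "x \<in> component E S v \<Longrightarrow> y \<in> S \<Longrightarrow> (x, y) \<in> E \<Longrightarrow> y \<in> component E S v"
  unfolding component_def by (auto intro: rtrancl_into_rtrancl)

lemma component_eq:
  assumes "sym E" "w \<in> component E S v"
  shows "component E S w = component E S v"
proof -
  have "(v, w) \<in> (E \<inter> S \<times> S)\<^sup>*" using assms(2) unfolding component_def by simp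
  moreover then have "(w, v) \<in> (E \<inter> S \<times> S)\<^sup>*" using rtrancl_restrict_sym assms(1) by fast
  ultimately show ?thesis unfolding component_def by (auto intro: rtrancl_trans)
qed

lemma component_disjoint:
  "sym E \<Longrightarrow> x \<in> component E S v \<Longrightarrow> x \<in> component E S w \<Longrightarrow> component E S v = component E S w"
  using component_eq by metis

lemma component_reachable_within:
  assumes "y \<in> component E S v"
  shows "(v, y) \<in> (E \<inter> component E S v \<times> component E S v)\<^sup>*"
proof -
  have "(v, y) \<in> (E \<inter> S \<times> S)\<^sup>*" using assms unfolding component_def by auto
  then show ?thesis
  proof (induction rule: rtrancl_induct)
    case (step y z)
    then have "(y, z) \<in> E \<inter> component E S v \<times> component E S v"
      unfolding component_def by (auto intro: rtrancl_into_rtrancl)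
    with step.IH show ?case by (rule rtrancl_into_rtrancl)
  qed simp
qed

lemma connected_in_component:
  assumes "sym (edges G)"
  shows "connected_in G (component (edges G) S v)"
  unfolding connected_in_def
proof (intro ballI)
  let ?C = "component (edges G) S v"
  fix x y assume x: "x \<in> ?C" and y: "y \<in> ?C"
  have "(x, v) \<in> (edges G \<inter> ?C \<times> ?C)\<^sup>*"
    using rtrancl_restrict_sym[OF assms component_reachable_within[OF x]] .
  moreover have "(v, y) \<in> (edges G \<inter> ?C \<times> ?C)\<^sup>*" using component_reachable_within[OF y] .
  ultimately show "(x, y) \<in> (edges G \<inter> ?C \<times> ?C)\<^sup>*" by (rule rtrancl_trans)
qed

lemma component_maximal:
  assumes "connected_in G K" "K \<subseteq> S" "z \<in> K" "z \<in> component (edges G) S v"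
  shows "K \<subseteq> component (edges G) S v"
proof
  fix y assume "y \<in> K"
  then have "(z, y) \<in> (edges G \<inter> S \<times> S)\<^sup>*"
    using assms(1-3) unfolding connected_in_def by (blast intro: rtrancl_restrict_mono)
  then show "y \<in> component (edges G) S v"
    using assms(4) \<open>y \<in> K\<close> assms(2) unfolding component_def by (auto intro: rtrancl_trans)
qed

lemma rtrancl_restrict_simple_path:
  assumes "(a, b) \<in> (E \<inter> S \<times> S)\<^sup>*" "a \<in> S"
  shows "\<exists>p. p \<noteq> [] \<and> hd p = a \<and> last p = b \<and> distinct p \<and> set p \<subseteq> S
           \<and> successively (\<lambda>x y. (x, y) \<in> E) p"
  using assms(1)
proof (induction rule: rtrancl_induct)
  case base
  then show ?case using assms(2) by (intro exI[of _ "[a]"]) auto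
next
  case (step y z)
  then obtain p where p: "p \<noteq> []" "hd p = a" "last p = y" "distinct p" "set p \<subseteq> S"
    "successively (\<lambda>x y. (x, y) \<in> E) p" by blast
  show ?case
  proof (cases "z \<in> set p")
    case True
    then obtain k where k: "k < length p" "p ! k = z" by (meson in_set_conv_nth)
    let ?q = "take (Suc k) p"
    have "successively (\<lambda>x y. (x, y) \<in> E) (?q @ drop (Suc k) p)" using p(6) by simp
    then have "successively (\<lambda>x y. (x, y) \<in> E) ?q" by (simp only: successively_append_iff)
    moreover have "last ?q = z" using k by (simp add: take_Suc_conv_app_nth)
    ultimately show ?thesis using p set_take_subset[of "Suc k" p]
      by (intro exI[of _ ?q]) (auto simp: hd_take)
  next
    case False
    then show ?thesis using p step(2)
      by (intro exI[of _ "p @ [z]"]) (auto simp: successively_append_iff)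
  qed
qed

lemma is_cycle_iff:
  "is_cycle G vs \<longleftrightarrow> length vs \<ge> 3 \<and> distinct vs \<and> set vs \<subseteq> verts G
     \<and> successively (\<lambda>x y. (x, y) \<in> edges G) vs \<and> (last vs, hd vs) \<in> edges G"
  unfolding is_cycle_def successively_conv_nth by (auto simp: less_diff_conv)

lemma is_cycle_rotate1:
  assumes "is_cycle G vs"
  shows "is_cycle G (rotate1 vs)"
proof (cases vs)
  case (Cons x xs)
  then have "xs \<noteq> []" using assms unfolding is_cycle_def by auto
  then show ?thesis using assms Cons
    by (auto simp: is_cycle_iff successively_append_iff successively_Cons hd_append)
qed (use assms in simp)

lemma is_cycle_rotate: "is_cycle G vs \<Longrightarrow> is_cycle G (rotate n vs)"
  by (induction n) (auto simp: is_cycle_rotate1)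

lemma cycle_through_edge:
  assumes G: "is_graph T" and tt': "(t, t') \<in> edges T" and tb: "(t, b) \<in> edges T"
    and at': "(a, t') \<in> edges T" and ba: "(b, a) \<in> (edges T \<inter> S \<times> S)\<^sup>*" and "b \<in> S"
    and "t \<notin> S" "t' \<notin> S" "S \<subseteq> verts T"
  shows "\<exists>vs. is_cycle T vs"
proof -
  obtain p where p: "p \<noteq> []" "hd p = b" "last p = a" "distinct p" "set p \<subseteq> S"
    "successively (\<lambda>x y. (x, y) \<in> edges T) p"
    using rtrancl_restrict_simple_path[OF ba \<open>b \<in> S\<close>] by blast
  let ?vs = "(t # p) @ [t']"
  have "(t', t) \<in> edges T" using tt' is_graph_sym[OF G] by (auto dest: symD)
  moreover have "t \<noteq> t'" using tt' is_graph_irrefl[OF G] by blast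
  ultimately have "is_cycle T ?vs"
    using p tb at' assms(7-9) is_graph_edgeD[OF G tt']
    by (auto simp: is_cycle_iff successively_append_iff successively_Cons Suc_le_eq)
  then show ?thesis by blast
qed

text \<open>The first repeated vertex of the walk closes a cycle.\<close>

lemma cycle_of_nonbacktracking_walk:
  assumes G: "is_graph T" and w: "\<And>i. w i \<in> verts T" "\<And>i. (w i, w (Suc i)) \<in> edges T"
    "\<And>i. w (Suc (Suc i)) \<noteq> w i"
  shows "\<exists>vs. is_cycle T vs"
proof -
  have fin: "finite (verts T)" using G unfolding is_graph_iff by blast
  have "\<not> inj_on w {0..card (verts T)}"
  proof
    assume "inj_on w {0..card (verts T)}"
    then have "card (w ` {0..card (verts T)}) = Suc (card (verts T))" by (simp add: card_image)
    moreover have "card (w ` {0..card (verts T)}) \<le> card (verts T)"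
      by (rule card_mono[OF fin]) (use w in auto)
    ultimately show False by simp
  qed
  then obtain m n where "m \<noteq> n" "w m = w n" unfolding inj_on_def by blast
  then have ex: "\<exists>j. \<exists>i<j. w i = w j" by (metis linorder_neqE_nat)
  define j where "j = (LEAST j. \<exists>i<j. w i = w j)"
  obtain i where i: "i < j" "w i = w j" using LeastI_ex[OF ex] unfolding j_def by blast
  have "w a \<noteq> w b" if "a < b" "b < j" for a b
    using that not_less_Least[of b "\<lambda>j. \<exists>i<j. w i = w j"] unfolding j_def by blast
  then have inj: "inj_on w {i..<j}" unfolding inj_on_def
    by (metis atLeastLessThan_iff linorder_neqE_nat)
  let ?vs = "map w [i..<j]"
  have "j \<noteq> Suc i" using i is_graph_irrefl[OF G] w(2) by metis
  moreover have "j \<noteq> Suc (Suc i)" using i w(3) by metis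
  ultimately have "length ?vs \<ge> 3" using i by simp
  moreover have "successively (\<lambda>x y. (x, y) \<in> edges T) ?vs"
    unfolding successively_conv_nth using w(2) by (simp add: nth_map_upt add.commute)
  moreover have "(last ?vs, hd ?vs) \<in> edges T"
    using w(2)[of "j - 1"] i by (simp add: last_map hd_map)
  ultimately have "is_cycle T ?vs"
    using inj w(1) unfolding is_cycle_iff by (auto simp: distinct_map)
  then show ?thesis by blast
qed

section \<open>Trees\<close>

lemma no_cycle_if_card_le_2:
  assumes "finite (verts G)" "card (verts G) \<le> 2"
  shows "\<not> is_cycle G vs"
proof
  assume c: "is_cycle G vs"
  then have "length vs = card (set vs)" unfolding is_cycle_def by (simp add: distinct_card)
  moreover have "card (set vs) \<le> card (verts G)"
    by (rule card_mono[OF assms(1)]) (use c in \<open>simp add: is_cycle_def\<close>)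
  ultimately show False using c assms(2) unfolding is_cycle_def by simp
qed

lemma is_tree_singleton: "is_tree ({n}, {})"
  unfolding is_tree_def using no_cycle_if_card_le_2[of "({n}, {})"]
  by (simp add: is_graph_iff connected_in_def)

lemma is_tree_edge:
  assumes "a \<noteq> b"
  shows "is_tree ({a, b}, {(a, b), (b, a)})"
proof -
  have "connected_in ({a, b}, {(a, b), (b, a)}) {a, b}"
    unfolding connected_in_def by (auto intro: r_into_rtrancl)
  moreover have "is_graph ({a, b}, {(a, b), (b, a)})"
    using assms unfolding is_graph_iff sym_def by auto
  moreover have "card {a, b} \<le> 2" by (simp add: card_insert_if)
  ultimately show ?thesis
    using no_cycle_if_card_le_2[of "({a, b}, {(a, b), (b, a)})"] unfolding is_tree_def by auto
qed

lemma is_cycle_inv_image: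
  assumes c: "is_cycle (f ` V, map_prod f f ` E) vs" and inj: "inj_on f V" and EV: "E \<subseteq> V \<times> V"
  shows "is_cycle (V, E) (map (inv_into V f) vs)"
proof -
  let ?g = "inv_into V f"
  have sv: "set vs \<subseteq> f ` V" using c unfolding is_cycle_def by simp
  have edge: "(?g x, ?g y) \<in> E" if "(x, y) \<in> map_prod f f ` E" for x y
    using that EV inj by (auto simp: inv_into_f_f)
  have "successively (\<lambda>x y. (x, y) \<in> map_prod f f ` E) vs" using c unfolding is_cycle_iff by simp
  then have "successively (\<lambda>x y. (?g x, ?g y) \<in> E) vs" by (rule successively_mono) (rule edge)
  moreover have "vs \<noteq> []" "(last vs, hd vs) \<in> map_prod f f ` E" using c unfolding is_cycle_def by auto
  moreover have "inj_on ?g (set vs)" using sv inj_on_inv_into inj_on_subset by blast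
  ultimately show ?thesis
    using c sv edge unfolding is_cycle_iff
    by (auto simp: successively_map distinct_map last_map hd_map inv_into_into)
qed

lemma is_tree_image:
  assumes T: "is_tree (V, E)" and inj: "inj_on f V"
  shows "is_tree (f ` V, map_prod f f ` E)"
proof -
  have G: "is_graph (V, E)" using T unfolding is_tree_def by blast
  then have EV: "E \<subseteq> V \<times> V" and "finite V" and "sym E" unfolding is_graph_iff by simp_all
  have "(x, x) \<notin> map_prod f f ` E" for x
  proof
    assume "(x, x) \<in> map_prod f f ` E"
    then obtain a b where ab: "(a, b) \<in> E" "f a = f b" by auto
    then have "a = b" using EV inj unfolding inj_on_def by blast
    then show False using ab is_graph_irrefl[OF G] by simp
  qed
  moreover have "sym (map_prod f f ` E)" using \<open>sym E\<close> unfolding sym_def by auto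
  ultimately have "is_graph (f ` V, map_prod f f ` E)"
    using EV \<open>finite V\<close> unfolding is_graph_iff by auto
  moreover have "connected_in (f ` V, map_prod f f ` E) (f ` V)"
    using T connected_in_image unfolding is_tree_def by fastforce
  moreover have "\<not> is_cycle (f ` V, map_prod f f ` E) vs" for vs
  proof
    assume "is_cycle (f ` V, map_prod f f ` E) vs"
    then have "is_cycle (V, E) (map (inv_into V f) vs)" using is_cycle_inv_image[OF _ inj EV] by blast
    then show False using T unfolding is_tree_def by blast
  qed
  ultimately show ?thesis using T unfolding is_tree_def by auto
qed


lemma is_graph_Un:
  assumes "is_graph (V1, E1)" "is_graph (V2, E2)"
  shows "is_graph (V1 \<union> V2, E1 \<union> E2)"
  using assms unfolding is_graph_iff by (auto simp: sym_Un)

lemma successively_stays_in: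
  assumes "successively (\<lambda>x y. (x, y) \<in> E) xs" "xs \<noteq> []" "hd xs \<in> P" "r \<notin> set xs"
    and closed: "\<And>u v. (u, v) \<in> E \<Longrightarrow> u \<in> P \<Longrightarrow> v \<in> P \<or> v = r"
  shows "set xs \<subseteq> P"
  using assms(1-4)
proof (induction xs)
  case (Cons x xs)
  show ?case
  proof (cases "xs = []")
    case False
    then have "(x, hd xs) \<in> E" "hd xs \<noteq> r" using Cons.prems by (auto simp: successively_Cons)
    then have "hd xs \<in> P" using closed Cons.prems(3) by fastforce
    then have "set xs \<subseteq> P" using Cons False by (simp add: successively_Cons)
    then show ?thesis using Cons.prems(3) by simp
  qed (use Cons.prems in simp)
qed simp

text \<open>A cycle through the cut vertex \<open>r\<close> is rotated to start at \<open>r\<close>; the remaining vertices form a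
  walk avoiding \<open>r\<close>, which cannot pass between the two sides.\<close>

lemma cycle_on_one_side:
  assumes c: "is_cycle (V1 \<union> V2, E1 \<union> E2) vs" and I: "V1 \<inter> V2 = {r}"
    and E1: "E1 \<subseteq> V1 \<times> V1" and E2: "E2 \<subseteq> V2 \<times> V2"
  shows "set vs \<subseteq> V1 \<or> set vs \<subseteq> V2"
proof -
  obtain zs where zs: "zs \<noteq> []" "r \<notin> set zs" "set vs \<subseteq> insert r (set zs)" "set zs \<subseteq> V1 \<union> V2"
    "successively (\<lambda>x y. (x, y) \<in> E1 \<union> E2) zs"
  proof (cases "r \<in> set vs")
    case True
    then obtain n where n: "n < length vs" "vs ! n = r" by (meson in_set_conv_nth)
    define ys where "ys = rotate n vs"
    have cy: "is_cycle (V1 \<union> V2, E1 \<union> E2) ys" unfolding ys_def by (rule is_cycle_rotate[OF c])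
    have "vs \<noteq> []" using n by auto
    then have "hd ys = r" "ys \<noteq> []" using n unfolding ys_def by (simp_all add: hd_rotate_conv_nth)
    then obtain zs where ys: "ys = r # zs" by (cases ys) auto
    have "set vs = set ys" unfolding ys_def by simp
    then show thesis using cy unfolding ys is_cycle_iff
      by (intro that[of zs]) (auto simp: successively_Cons)
  next
    case False
    then show thesis using c by (intro that[of vs]) (auto simp: is_cycle_iff)
  qed
  have closed1: "v \<in> V1 - {r} \<or> v = r" if "(u, v) \<in> E1 \<union> E2" "u \<in> V1 - {r}" for u v
    using that I E1 E2 by auto
  have closed2: "v \<in> V2 - {r} \<or> v = r" if "(u, v) \<in> E1 \<union> E2" "u \<in> V2 - {r}" for u v
    using that I E1 E2 by auto
  have "hd zs \<in> V1 - {r} \<or> hd zs \<in> V2 - {r}" using zs(1,2,4) hd_in_set by blast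
  then have "set zs \<subseteq> V1 - {r} \<or> set zs \<subseteq> V2 - {r}"
  proof
    assume "hd zs \<in> V1 - {r}"
    then show ?thesis by (intro disjI1 successively_stays_in[OF zs(5,1) _ zs(2)] closed1)
  next
    assume "hd zs \<in> V2 - {r}"
    then show ?thesis by (intro disjI2 successively_stays_in[OF zs(5,1) _ zs(2)] closed2)
  qed
  then show ?thesis using zs(3) I by blast
qed

lemma cycle_restrict_side:
  assumes c: "is_cycle (V1 \<union> V2, E1 \<union> E2) vs" and s: "set vs \<subseteq> V1" and I: "V1 \<inter> V2 = {r}"
    and E2: "E2 \<subseteq> V2 \<times> V2" and irr: "(r, r) \<notin> E2"
  shows "is_cycle (V1, E1) vs"
proof -
  have e: "(u, v) \<in> E1" if "u \<in> V1" "v \<in> V1" "(u, v) \<in> E1 \<union> E2" for u v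
  proof (rule ccontr)
    assume "(u, v) \<notin> E1"
    then have "(u, v) \<in> E2" using that(3) by blast
    then have "u = r" "v = r" using that(1,2) E2 I by auto
    then show False using irr \<open>(u, v) \<in> E2\<close> by simp
  qed
  have "successively (\<lambda>x y. (x, y) \<in> E1 \<union> E2) vs" using c unfolding is_cycle_iff by simp
  then have "successively (\<lambda>x y. (x, y) \<in> E1) vs"
  proof (rule successively_mono)
    fix x y assume "x \<in> set vs" "y \<in> set vs" "(x, y) \<in> E1 \<union> E2"
    then show "(x, y) \<in> E1" using s by (intro e) auto
  qed
  moreover have "(last vs, hd vs) \<in> E1"
  proof (rule e)
    have "vs \<noteq> []" using c unfolding is_cycle_def by auto
    then show "last vs \<in> V1" "hd vs \<in> V1" using s by auto
    show "(last vs, hd vs) \<in> E1 \<union> E2" using c unfolding is_cycle_def by simp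
  qed
  ultimately show ?thesis using c s unfolding is_cycle_iff by (simp only: verts_pair edges_pair)
qed

lemma is_tree_glue:
  assumes T1: "is_tree (V1, E1)" and T2: "is_tree (V2, E2)" and I: "V1 \<inter> V2 = {r}"
  shows "is_tree (V1 \<union> V2, E1 \<union> E2)"
proof -
  have G1: "is_graph (V1, E1)" and G2: "is_graph (V2, E2)" using T1 T2 unfolding is_tree_def by auto
  have E1: "E1 \<subseteq> V1 \<times> V1" and E2: "E2 \<subseteq> V2 \<times> V2"
    using G1 G2 unfolding is_graph_iff by simp_all
  have irr1: "(r, r) \<notin> E1" and irr2: "(r, r) \<notin> E2"
    using is_graph_irrefl[OF G1] is_graph_irrefl[OF G2] by simp_all
  have "connected_in (V1 \<union> V2, E1 \<union> E2) (V1 \<union> V2)"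
  proof (rule connected_in_Un)
    show "connected_in (V1 \<union> V2, E1 \<union> E2) V1"
      using T1 connected_in_mono_edges[of "(V1, E1)"] unfolding is_tree_def by force
    show "connected_in (V1 \<union> V2, E1 \<union> E2) V2"
      using T2 connected_in_mono_edges[of "(V2, E2)"] unfolding is_tree_def by force
  qed (use I in blast)
  moreover have "\<not> is_cycle (V1 \<union> V2, E1 \<union> E2) vs" for vs
  proof
    assume c: "is_cycle (V1 \<union> V2, E1 \<union> E2) vs"
    have c': "is_cycle (V2 \<union> V1, E2 \<union> E1) vs" using c by (simp only: Un_commute)
    have I': "V2 \<inter> V1 = {r}" using I by blast
    from cycle_on_one_side[OF c I E1 E2] show False
    proof
      assume "set vs \<subseteq> V1"
      then have "is_cycle (V1, E1) vs" using cycle_restrict_side[OF c _ I E2] irr2 by blast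
      then show False using T1 unfolding is_tree_def by blast
    next
      assume "set vs \<subseteq> V2"
      then have "is_cycle (V2, E2) vs" using cycle_restrict_side[OF c' _ I' E1] irr1 by blast
      then show False using T2 unfolding is_tree_def by blast
    qed
  qed
  moreover have "is_graph (V1 \<union> V2, E1 \<union> E2)" using G1 G2 by (rule is_graph_Un)
  moreover have "V1 \<union> V2 \<noteq> {}" using I by blast
  ultimately show ?thesis unfolding is_tree_def by simp
qed

section \<open>Tree decompositions of induced subgraphs\<close>

definition induced :: "'a graph \<Rightarrow> 'a set \<Rightarrow> 'a graph" where
  "induced G A = (A, edges G \<inter> A \<times> A)"

lemma tree_decomposition_induced_iff:
  "tree_decomposition (induced G A) T B \<longleftrightarrow> is_tree T \<and> (\<forall>t\<in>verts T. B t \<subseteq> A)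
     \<and> (\<forall>v\<in>A. \<exists>t\<in>verts T. v \<in> B t)
     \<and> (\<forall>u v. (u, v) \<in> edges G \<longrightarrow> u \<in> A \<longrightarrow> v \<in> A \<longrightarrow> (\<exists>t\<in>verts T. u \<in> B t \<and> v \<in> B t))
     \<and> (\<forall>v\<in>A. connected_in T {t \<in> verts T. v \<in> B t})"
  unfolding tree_decomposition_def induced_def by (simp add: Ball_def, blast)

lemma induced_verts: "is_graph G \<Longrightarrow> induced G (verts G) = G"
  unfolding induced_def is_graph_iff by (cases G) auto

lemma tree_decomposition_single_bag: "tree_decomposition (induced G A) ({n}, {}) (\<lambda>_. A)"
  unfolding tree_decomposition_induced_iff using is_tree_singleton[of n]
  by (auto simp: connected_in_singleton)

lemma tree_decomposition_two_bags:
  assumes "sym (edges G)" "edges G \<inter> (P - Q) \<times> (Q - P) = {}"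
  shows "tree_decomposition (induced G (P \<union> Q)) ({0, 1}, {(0, 1), (1, 0)})
           (\<lambda>t. if t = 0 then P else Q)"
proof -
  let ?T = "({0::nat, 1}, {(0, 1), (1, 0)})"
  have T: "is_tree ?T" using is_tree_edge[of "0::nat" 1] by simp
  have conn: "connected_in ?T S" if "S \<subseteq> {0, 1}" for S
  proof -
    have "S \<in> {{}, {0}, {1}, {0, 1}}" using that by auto
    then show ?thesis using T connected_in_singleton unfolding is_tree_def
      by (auto simp: connected_in_def)
  qed
  have "\<forall>v\<in>P \<union> Q. connected_in ?T {t \<in> verts ?T. v \<in> (if t = 0 then P else Q)}"
    by (intro ballI conn) auto
  moreover have "(u \<in> P \<and> v \<in> P) \<or> (u \<in> Q \<and> v \<in> Q)"
    if "(u, v) \<in> edges G" "u \<in> P \<union> Q" "v \<in> P \<union> Q" for u v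
    using that assms by (auto dest: symD)
  ultimately show ?thesis
    unfolding tree_decomposition_induced_iff using T by auto
qed

lemma tree_decomposition_image:
  assumes TD: "tree_decomposition G T B" and inj: "inj_on f (verts T)"
  shows "tree_decomposition G (f ` verts T, map_prod f f ` edges T) (B \<circ> inv_into (verts T) f)"
proof -
  let ?g = "inv_into (verts T) f"
  have B: "(B \<circ> ?g) (f t) = B t" if "t \<in> verts T" for t using that inj by simp
  have "is_tree (f ` verts T, map_prod f f ` edges T)"
    using TD inj is_tree_image[of "verts T" "edges T" f] unfolding tree_decomposition_def graph_eta by blast
  moreover have "{t \<in> f ` verts T. v \<in> (B \<circ> ?g) t} = f ` {t \<in> verts T. v \<in> B t}" for v
    using B by force
  moreover have "connected_in (f ` verts T, map_prod f f ` edges T) (f ` {t \<in> verts T. v \<in> B t})"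
    if "v \<in> verts G" for v
    using TD that connected_in_image[of "verts T" "edges T"] unfolding tree_decomposition_def graph_eta
    by blast
  moreover have "\<forall>t\<in>f ` verts T. (B \<circ> ?g) t \<subseteq> verts G"
    using TD B unfolding tree_decomposition_def by auto
  moreover have lift: "\<exists>t\<in>f ` verts T. P ((B \<circ> ?g) t)" if h: "\<exists>t\<in>verts T. P (B t)" for P
  proof -
    obtain t where "t \<in> verts T" "P (B t)" using h by blast
    then show ?thesis using B by (intro bexI[of _ "f t"]) auto
  qed
  moreover have "\<exists>t\<in>f ` verts T. v \<in> (B \<circ> ?g) t" if "v \<in> verts G" for v
    using that TD unfolding tree_decomposition_def by (intro lift) blast
  moreover have "\<exists>t\<in>f ` verts T. u \<in> (B \<circ> ?g) t \<and> v \<in> (B \<circ> ?g) t" if "(u, v) \<in> edges G" for u v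
    using that TD unfolding tree_decomposition_def by (intro lift) blast
  ultimately show ?thesis unfolding tree_decomposition_def by auto
qed

lemma connected_in_Un_sides:
  assumes "S1 = {} \<or> connected_in (V1, E1) S1" "S2 = {} \<or> connected_in (V2, E2) S2"
    and "S1 = {} \<or> S2 = {} \<or> S1 \<inter> S2 \<noteq> {}"
  shows "connected_in (V1 \<union> V2, E1 \<union> E2) (S1 \<union> S2)"
proof -
  have "connected_in (V1 \<union> V2, E1 \<union> E2) S1" "connected_in (V1 \<union> V2, E1 \<union> E2) S2"
    using assms(1,2) connected_in_mono_edges[of "(V1, E1)" S1] connected_in_mono_edges[of "(V2, E2)" S2]
    by (auto simp: connected_in_def)
  then show ?thesis using assms(3) connected_in_Un by fastforce
qed

lemma tree_decomposition_union:
  assumes D1: "tree_decomposition (induced G A1) (V1, E1) B1"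
    and D2: "tree_decomposition (induced G A2) (V2, E2) B2"
    and x: "V1 \<inter> V2 = {x}" and bag: "B1 x = B2 x" and meet: "A1 \<inter> A2 \<subseteq> B1 x"
    and sym: "sym (edges G)" and no_cross: "edges G \<inter> (A1 - A2) \<times> (A2 - A1) = {}"
  shows "tree_decomposition (induced G (A1 \<union> A2)) (V1 \<union> V2, E1 \<union> E2)
    (\<lambda>n. if n \<in> V1 then B1 n else B2 n)" (is "tree_decomposition _ _ ?B")
proof -
  have B1: "?B t = B1 t" if "t \<in> V1" for t using that by simp
  have B2: "?B t = B2 t" if "t \<in> V2" for t using that x bag by auto
  have D1': "is_tree (V1, E1)" "\<forall>t\<in>V1. B1 t \<subseteq> A1" "\<forall>v\<in>A1. \<exists>t\<in>V1. v \<in> B1 t"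
      "\<forall>u v. (u, v) \<in> edges G \<longrightarrow> u \<in> A1 \<longrightarrow> v \<in> A1 \<longrightarrow> (\<exists>t\<in>V1. u \<in> B1 t \<and> v \<in> B1 t)"
      "\<forall>v\<in>A1. connected_in (V1, E1) {t \<in> V1. v \<in> B1 t}"
    using D1 unfolding tree_decomposition_induced_iff by simp_all
  have D2': "is_tree (V2, E2)" "\<forall>t\<in>V2. B2 t \<subseteq> A2" "\<forall>v\<in>A2. \<exists>t\<in>V2. v \<in> B2 t"
      "\<forall>u v. (u, v) \<in> edges G \<longrightarrow> u \<in> A2 \<longrightarrow> v \<in> A2 \<longrightarrow> (\<exists>t\<in>V2. u \<in> B2 t \<and> v \<in> B2 t)"
      "\<forall>v\<in>A2. connected_in (V2, E2) {t \<in> V2. v \<in> B2 t}"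
    using D2 unfolding tree_decomposition_induced_iff by simp_all
  have from1: "\<exists>t\<in>V1 \<union> V2. P (?B t)" if h: "\<exists>t\<in>V1. P (B1 t)" for P
  proof -
    obtain t where "t \<in> V1" "P (B1 t)" using h by blast
    then show ?thesis using B1 by (intro bexI[of _ t]) auto
  qed
  have from2: "\<exists>t\<in>V1 \<union> V2. P (?B t)" if h: "\<exists>t\<in>V2. P (B2 t)" for P
  proof -
    obtain t where "t \<in> V2" "P (B2 t)" using h by blast
    then show ?thesis using B2 by (intro bexI[of _ t]) auto
  qed
  have inside: "(u \<in> A1 \<and> v \<in> A1) \<or> (u \<in> A2 \<and> v \<in> A2)"
    if "(u, v) \<in> edges G" "u \<in> A1 \<union> A2" "v \<in> A1 \<union> A2" for u v
    using that no_cross sym by (auto dest: symD)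
  have subtree: "{t \<in> V1 \<union> V2. v \<in> ?B t} = {t \<in> V1. v \<in> B1 t} \<union> {t \<in> V2. v \<in> B2 t}" for v
    using x bag by auto
  have "connected_in (V1 \<union> V2, E1 \<union> E2) {t \<in> V1 \<union> V2. v \<in> ?B t}" for v
    unfolding subtree
  proof (rule connected_in_Un_sides)
    show "{t \<in> V1. v \<in> B1 t} = {} \<or> connected_in (V1, E1) {t \<in> V1. v \<in> B1 t}" using D1'(2,5) by blast
    show "{t \<in> V2. v \<in> B2 t} = {} \<or> connected_in (V2, E2) {t \<in> V2. v \<in> B2 t}" using D2'(2,5) by blast
    show "{t \<in> V1. v \<in> B1 t} = {} \<or> {t \<in> V2. v \<in> B2 t} = {}
        \<or> {t \<in> V1. v \<in> B1 t} \<inter> {t \<in> V2. v \<in> B2 t} \<noteq> {}"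
      using D1'(2) D2'(2) meet bag x by blast
  qed
  moreover have "is_tree (V1 \<union> V2, E1 \<union> E2)" using D1'(1) D2'(1) x by (rule is_tree_glue)
  moreover have "\<forall>t\<in>V1 \<union> V2. ?B t \<subseteq> A1 \<union> A2" using D1'(2) D2'(2) B2 by auto
  moreover have "\<exists>t\<in>V1 \<union> V2. v \<in> ?B t" if "v \<in> A1 \<union> A2" for v
  proof (cases "v \<in> A1")
    case True
    then show ?thesis using D1'(3) by (intro from1) blast
  next
    case False
    then show ?thesis using D2'(3) that by (intro from2) blast
  qed
  moreover have "\<exists>t\<in>V1 \<union> V2. u \<in> ?B t \<and> v \<in> ?B t"
    if "(u, v) \<in> edges G" "u \<in> A1 \<union> A2" "v \<in> A1 \<union> A2" for u v
  proof (cases "u \<in> A1 \<and> v \<in> A1")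
    case True
    then show ?thesis using D1'(4) that(1) by (intro from1) blast
  next
    case False
    then have "u \<in> A2 \<and> v \<in> A2" using inside[OF that] by blast
    then show ?thesis using D2'(4) that(1) by (intro from2) blast
  qed
  ultimately show ?thesis unfolding tree_decomposition_induced_iff verts_pair edges_pair by blast
qed

lemma tree_decomposition_glue:
  fixes T1 T2 :: "nat graph"
  assumes D1: "tree_decomposition (induced G A1) T1 B1" and D2: "tree_decomposition (induced G A2) T2 B2"
    and x1: "x1 \<in> verts T1" and x2: "x2 \<in> verts T2" and bag: "B1 x1 = B2 x2"
    and meet: "A1 \<inter> A2 \<subseteq> B1 x1"
    and sym: "sym (edges G)" and no_cross: "edges G \<inter> (A1 - A2) \<times> (A2 - A1) = {}"
  shows "\<exists>T B. tree_decomposition (induced G (A1 \<union> A2)) T B \<and> B ` verts T = B1 ` verts T1 \<union> B2 ` verts T2"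
proof -
  define N where "N = Suc (Max (verts T1))"
  have "finite (verts T1)" using D1 unfolding tree_decomposition_def is_tree_def is_graph_iff by simp
  then have below: "t < N" if "t \<in> verts T1" for t using that unfolding N_def by (simp add: le_imp_less_Suc)
  define f where "f n = (if n = x2 then x1 else n + N)" for n
  have inj: "inj_on f (verts T2)" using below[OF x1] unfolding f_def inj_on_def by auto
  have VI: "verts T1 \<inter> f ` verts T2 = {x1}" using below x1 x2 unfolding f_def by (auto split: if_splits)
  let ?B2 = "B2 \<circ> inv_into (verts T2) f"
  define T where "T = (verts T1 \<union> f ` verts T2, edges T1 \<union> map_prod f f ` edges T2)"
  define B where "B n = (if n \<in> verts T1 then B1 n else ?B2 n)" for n
  have D1': "tree_decomposition (induced G A1) (verts T1, edges T1) B1" using D1 by (simp add: graph_eta)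
  have D2': "tree_decomposition (induced G A2) (f ` verts T2, map_prod f f ` edges T2) ?B2"
    by (rule tree_decomposition_image[OF D2 inj])
  have B_f: "B (f m) = B2 m" if "m \<in> verts T2" for m
  proof (cases "f m \<in> verts T1")
    case True
    then have "m = x2" using below unfolding f_def by (auto split: if_splits)
    then show ?thesis using bag x1 unfolding B_def f_def by simp
  qed (use that inj in \<open>simp add: B_def\<close>)
  have "f x2 = x1" unfolding f_def by simp
  then have "B1 x1 = ?B2 x1" using inv_into_f_f[OF inj x2] bag by simp
  then have "tree_decomposition (induced G (A1 \<union> A2)) T B"
    unfolding T_def B_def by (rule tree_decomposition_union[OF D1' D2' VI _ meet sym no_cross])
  moreover have "B ` verts T = B1 ` verts T1 \<union> B2 ` verts T2"
  proof -
    have "B ` verts T1 = B1 ` verts T1" unfolding B_def by simp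
    moreover have "B ` f ` verts T2 = B2 ` verts T2" unfolding image_image using B_f by simp
    ultimately show ?thesis unfolding T_def by (simp add: image_Un)
  qed
  ultimately show ?thesis by blast
qed

lemma tree_decomposition_attach:
  assumes D1: "tree_decomposition (induced G A1) T1 B1" and D2: "tree_decomposition (induced G A2) T2 B2"
    and x1: "x1 \<in> verts T1" and x2: "x2 \<in> verts T2" and meet: "A1 \<inter> A2 \<subseteq> B1 x1 \<inter> B2 x2"
    and sym: "sym (edges G)" and no_cross: "edges G \<inter> (A1 - A2) \<times> (A2 - A1) = {}"
  shows "\<exists>T B. tree_decomposition (induced G (A1 \<union> A2)) T B \<and> B ` verts T = B1 ` verts T1 \<union> B2 ` verts T2"
proof -
  let ?P = "B1 x1" and ?Q = "B2 x2"
  have P: "?P \<subseteq> A1" and Q: "?Q \<subseteq> A2"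
    using D1 D2 x1 x2 unfolding tree_decomposition_induced_iff by blast+
  have "edges G \<inter> (?P - ?Q) \<times> (?Q - ?P) = {}" using no_cross meet P Q by blast
  then have D0: "tree_decomposition (induced G (?P \<union> ?Q)) ({0, 1}, {(0, 1), (1, 0)})
      (\<lambda>t. if t = 0 then ?P else ?Q)"
    by (rule tree_decomposition_two_bags[OF sym])
  have "\<exists>T B. tree_decomposition (induced G (A1 \<union> (?P \<union> ?Q))) T B
      \<and> B ` verts T = B1 ` verts T1
        \<union> (\<lambda>t. if t = 0 then ?P else ?Q) ` verts ({0::nat, 1}, {(0, 1), (1, 0)})"
    by (rule tree_decomposition_glue[OF D1 D0 x1]) (use meet P Q no_cross sym in auto)
  then obtain T' B' where D': "tree_decomposition (induced G (A1 \<union> (?P \<union> ?Q))) T' B'"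
    and bags': "B' ` verts T' = B1 ` verts T1 \<union> {?Q, ?P}"
    by auto
  have "?Q \<in> B' ` verts T'" using bags' by simp
  then obtain y where y: "y \<in> verts T'" "B' y = ?Q" by auto
  have "\<exists>T B. tree_decomposition (induced G ((A1 \<union> (?P \<union> ?Q)) \<union> A2)) T B
      \<and> B ` verts T = B' ` verts T' \<union> B2 ` verts T2"
    by (rule tree_decomposition_glue[OF D' D2 y(1) x2 y(2)]) (use meet P Q no_cross sym y(2) in auto)
  moreover have "(A1 \<union> (?P \<union> ?Q)) \<union> A2 = A1 \<union> A2" using P Q by blast
  moreover have "B' ` verts T' \<union> B2 ` verts T2 = B1 ` verts T1 \<union> B2 ` verts T2"
    using bags' x1 x2 by auto
  ultimately show ?thesis by simp
qed

definition decomposable :: "'a graph \<Rightarrow> nat \<Rightarrow> 'a set \<Rightarrow> 'a set \<Rightarrow> bool" where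
  "decomposable G k A U \<longleftrightarrow> (\<exists>T B. tree_decomposition (induced G A) T B
     \<and> (\<forall>X\<in>B ` verts T. card X \<le> k) \<and> (\<exists>t\<in>verts T. U \<subseteq> B t))"

text \<open>Pieces meeting only inside a root set \<open>R\<close>, and whose private vertices have no neighbours elsewhere,
  are hung below a new root bag \<open>R\<close> one after the other.\<close>

lemma decomposable_star:
  assumes sym: "sym (edges G)" and fin: "finite Ps" and R: "card R \<le> k"
    and pieces: "\<And>P. P \<in> Ps \<Longrightarrow> decomposable G k P (R \<inter> P)"
    and overlap: "\<And>P P'. P \<in> Ps \<Longrightarrow> P' \<in> Ps \<Longrightarrow> P \<noteq> P' \<Longrightarrow> P \<inter> P' \<subseteq> R"
    and closed: "\<And>P x y. P \<in> Ps \<Longrightarrow> x \<in> P - R \<Longrightarrow> (x, y) \<in> edges G \<Longrightarrow> y \<in> R \<union> \<Union>Ps \<Longrightarrow> y \<in> P"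
  shows "decomposable G k (R \<union> \<Union>Ps) R"
proof -
  have "decomposable G k (R \<union> \<Union>Qs) R" if "Qs \<subseteq> Ps" for Qs
  proof -
    have "finite Qs" using that fin by (rule finite_subset)
    then show ?thesis using that
    proof (induction Qs rule: finite_induct)
      case empty
      show ?case using tree_decomposition_single_bag[of G R 0] R unfolding decomposable_def by auto
    next
      case (insert P Qs)
      obtain T1 B1 x1 where D1: "tree_decomposition (induced G (R \<union> \<Union>Qs)) T1 B1"
        and bound1: "\<forall>X\<in>B1 ` verts T1. card X \<le> k" and x1: "x1 \<in> verts T1" "R \<subseteq> B1 x1"
        using insert.IH insert.prems unfolding decomposable_def by blast
      have P: "P \<in> Ps" using insert.prems by blast
      obtain T2 B2 x2 where D2: "tree_decomposition (induced G P) T2 B2"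
        and bound2: "\<forall>X\<in>B2 ` verts T2. card X \<le> k" and x2: "x2 \<in> verts T2" "R \<inter> P \<subseteq> B2 x2"
        using pieces[OF P] unfolding decomposable_def by blast
      have "(R \<union> \<Union>Qs) \<inter> P \<subseteq> R \<inter> P"
        using overlap[OF P] insert.prems insert.hyps(2) by blast
      then have meet: "(R \<union> \<Union>Qs) \<inter> P \<subseteq> B1 x1 \<inter> B2 x2" using x1(2) x2(2) by blast
      have no_cross: "edges G \<inter> ((R \<union> \<Union>Qs) - P) \<times> (P - (R \<union> \<Union>Qs)) = {}"
      proof -
        have "y \<in> P" if "(y, x) \<in> edges G" "y \<in> R \<union> \<Union>Qs" "x \<in> P - (R \<union> \<Union>Qs)" for x y
          using closed[OF P, of x y] that sym insert.prems by (auto dest: symD)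
        then show ?thesis by blast
      qed
      obtain T B where D: "tree_decomposition (induced G ((R \<union> \<Union>Qs) \<union> P)) T B"
        and bags: "B ` verts T = B1 ` verts T1 \<union> B2 ` verts T2"
        using tree_decomposition_attach[OF D1 D2 x1(1) x2(1) meet sym no_cross] by auto
      have "R \<union> \<Union>(insert P Qs) = (R \<union> \<Union>Qs) \<union> P" by blast
      moreover have "\<forall>X\<in>B ` verts T. card X \<le> k" using bags bound1 bound2 by auto
      moreover have "B1 x1 \<in> B ` verts T" using bags x1(1) by auto
      then have "\<exists>t\<in>verts T. R \<subseteq> B t" using x1(2) by auto
      ultimately show ?case using D unfolding decomposable_def by metis
    qed
  qed
  then show ?thesis by blast
qed

section \<open>Balanced separators\<close>

definition balanced_separator :: "'a graph \<Rightarrow> 'a set \<Rightarrow> 'a set \<Rightarrow> bool" where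
  "balanced_separator G W X \<longleftrightarrow>
     (\<forall>K. K \<subseteq> verts G - X \<longrightarrow> connected_in G K \<longrightarrow> 2 * card (K \<inter> W) \<le> card W)"

definition has_balanced_separators :: "'a graph \<Rightarrow> nat \<Rightarrow> bool" where
  "has_balanced_separators G s \<longleftrightarrow>
     (\<forall>W \<subseteq> verts G. \<exists>X \<subseteq> verts G. card X \<le> s \<and> balanced_separator G W X)"

lemma obtain_superset_with_card:
  assumes "finite A" "U \<subseteq> A" "card U \<le> n" "n \<le> card A"
  obtains U' where "U \<subseteq> U'" "U' \<subseteq> A" "card U' = n"
proof -
  have "n - card U \<le> card (A - U)" using assms by (simp add: card_Diff_subset finite_subset)
  then obtain V where V: "V \<subseteq> A - U" "card V = n - card U" "finite V"
    by (rule obtain_subset_with_card_n)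
  have "card (U \<union> V) = n"
    using V assms by (subst card_Un_disjoint) (auto intro: finite_subset)
  then show ?thesis using V assms by (intro that[of "U \<union> V"]) auto
qed

lemma card_piece_bounds:
  assumes "finite A" "U \<subseteq> A" "C \<subseteq> A" "X \<subseteq> A" "card U = 3 * s + 1" "card X \<le> s"
    and half: "2 * card (U \<inter> C) \<le> card U"
  shows "card (C \<union> X) < card A" "card (U \<inter> C \<union> X) \<le> 3 * s + 1"
proof -
  have fin: "finite C" "finite X" "finite U" using assms(1-4) finite_subset by blast+
  have "card (U \<inter> (C \<union> X)) \<le> card (U \<inter> C) + card X"
    by (metis Int_Un_distrib card_Un_le card_mono fin(2) inf_le2 le_trans add_le_mono le_refl)
  then have "card (U \<inter> (C \<union> X)) < card U" using assms(5,6) half by linarith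
  then have "\<not> U \<subseteq> C \<union> X" by (metis inf.absorb_iff1 less_irrefl)
  then have "C \<union> X \<subset> A" using assms(2-4) by blast
  then show "card (C \<union> X) < card A" by (rule psubset_card_mono[OF assms(1)])
  show "card (U \<inter> C \<union> X) \<le> 3 * s + 1"
    using card_Un_le[of "U \<inter> C" X] assms(5,6) half by linarith
qed

text \<open>One step of the recursion: split \<open>A\<close> along a balanced separator \<open>X\<close> of the interface \<open>U\<close>. Each
  component \<open>C\<close> of \<open>A - X\<close> gives the smaller piece \<open>C \<union> X\<close> with interface \<open>U \<inter> C \<union> X\<close>, and the pieces
  hang below the bag \<open>U \<union> X\<close>.\<close>

lemma decomposable_by_separation:
  assumes G: "is_graph G" and A: "A \<subseteq> verts G" "U \<subseteq> A" "card U = 3 * s + 1"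
    and boundary: "\<And>x y. (x, y) \<in> edges G \<Longrightarrow> x \<in> A - U \<Longrightarrow> y \<in> A"
    and X: "X \<subseteq> verts G" "card X \<le> s" "balanced_separator G U X"
    and smaller: "\<And>A' U'. card A' < card A \<Longrightarrow> A' \<subseteq> verts G \<Longrightarrow> U' \<subseteq> A' \<Longrightarrow> card U' \<le> 3 * s + 1
      \<Longrightarrow> (\<And>x y. (x, y) \<in> edges G \<Longrightarrow> x \<in> A' - U' \<Longrightarrow> y \<in> A') \<Longrightarrow> decomposable G (4 * s + 1) A' U'"
  shows "decomposable G (4 * s + 1) A U"
proof -
  let ?E = "edges G"
  have finA: "finite A" using A(1) G finite_subset unfolding is_graph_iff by blast
  have symE: "sym ?E" using G by (rule is_graph_sym)
  define X' where "X' = X \<inter> A"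
  define S where "S = A - X'"
  define R where "R = U \<union> X'"
  define piece where "piece v = component ?E S v \<union> X'" for v
  have cX': "card X' \<le> s"
    using X(1,2) G card_mono[of X X'] unfolding X'_def is_graph_iff by (meson finite_subset inf_le1 le_trans)
  have C_sub: "component ?E S v \<subseteq> A" for v
    using component_subset[of ?E S v] unfolding S_def by blast
  have half: "2 * card (U \<inter> component ?E S v) \<le> card U" for v
  proof -
    have "component ?E S v \<subseteq> verts G - X"
      using component_subset[of ?E S v] A(1) unfolding S_def X'_def by blast
    then show ?thesis using X(3) connected_in_component[OF symE]
      unfolding balanced_separator_def by (metis Int_commute)
  qed
  have closed: "y \<in> piece v" if "x \<in> component ?E S v - U" "(x, y) \<in> ?E" for v x y
  proof -
    have "y \<in> A" using boundary that C_sub by blast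
    then show ?thesis using component_closed[of x ?E S v y] that unfolding piece_def S_def by blast
  qed
  have "decomposable G (4 * s + 1) (R \<union> \<Union>(piece ` S)) R"
  proof (rule decomposable_star[OF symE])
    show "finite (piece ` S)" using finA unfolding S_def by simp
    show "card R \<le> 4 * s + 1" using card_Un_le[of U X'] A(3) cX' unfolding R_def by linarith
  next
    fix P assume "P \<in> piece ` S"
    then obtain v where P: "P = piece v" by blast
    have "R \<inter> P = U \<inter> component ?E S v \<union> X'" unfolding R_def P piece_def by blast
    moreover have "decomposable G (4 * s + 1) (piece v) (U \<inter> component ?E S v \<union> X')"
    proof (rule smaller)
      show "card (piece v) < card A" "card (U \<inter> component ?E S v \<union> X') \<le> 3 * s + 1"
        unfolding piece_def using card_piece_bounds[OF finA A(2) C_sub _ A(3) cX' half] X'_def by auto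
      show "piece v \<subseteq> verts G" using C_sub A(1) unfolding piece_def X'_def by blast
      show "U \<inter> component ?E S v \<union> X' \<subseteq> piece v" unfolding piece_def by blast
      show "y \<in> piece v" if "(x, y) \<in> ?E" "x \<in> piece v - (U \<inter> component ?E S v \<union> X')" for x y
        using closed[of x v y] that unfolding piece_def by blast
    qed
    ultimately show "decomposable G (4 * s + 1) P (R \<inter> P)" unfolding P by simp
  next
    fix P P' assume "P \<in> piece ` S" "P' \<in> piece ` S" "P \<noteq> P'"
    then show "P \<inter> P' \<subseteq> R"
      using component_disjoint[OF symE] unfolding piece_def R_def by blast
  next
    fix P x y assume "P \<in> piece ` S" "x \<in> P - R" "(x, y) \<in> ?E"
    then show "y \<in> P" using closed unfolding piece_def R_def by blast
  qed
  moreover have "R \<union> \<Union>(piece ` S) = A"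
    using A(2) component_self[of _ S ?E] C_sub unfolding R_def piece_def S_def X'_def by blast
  ultimately show ?thesis unfolding decomposable_def R_def by blast
qed

lemma decomposable_from_separators:
  assumes G: "is_graph G" and sep: "has_balanced_separators G s"
  shows "A \<subseteq> verts G \<Longrightarrow> U \<subseteq> A \<Longrightarrow> card U \<le> 3 * s + 1
    \<Longrightarrow> (\<And>x y. (x, y) \<in> edges G \<Longrightarrow> x \<in> A - U \<Longrightarrow> y \<in> A) \<Longrightarrow> decomposable G (4 * s + 1) A U"
proof (induction "card A" arbitrary: A U rule: less_induct)
  case less
  have finA: "finite A" using less.prems(1) G finite_subset unfolding is_graph_iff by blast
  show ?case
  proof (cases "card A \<le> 4 * s + 1")
    case True
    then show ?thesis
      using tree_decomposition_single_bag[of G A 0] less.prems(2) unfolding decomposable_def by auto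
  next
    case False
    obtain U' where U': "U \<subseteq> U'" "U' \<subseteq> A" "card U' = 3 * s + 1"
      using obtain_superset_with_card[OF finA less.prems(2,3)] False by auto
    obtain X where X: "X \<subseteq> verts G" "card X \<le> s" "balanced_separator G U' X"
      using sep U'(2) less.prems(1) unfolding has_balanced_separators_def by (meson order_trans)
    have "decomposable G (4 * s + 1) A U'"
      by (rule decomposable_by_separation[OF G less.prems(1) U'(2,3) _ X less.hyps])
        (use less.prems(4) U'(1) in blast)
    then show ?thesis using U'(1) unfolding decomposable_def by blast
  qed
qed

lemma tree_decomposition_nodes_meeting_connected:
  assumes TD: "tree_decomposition H T B" and KV: "K \<subseteq> verts H" and KC: "connected_in H K"
  shows "connected_in T {u \<in> verts T. B u \<inter> K \<noteq> {}}"
  unfolding connected_in_def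
proof (intro ballI)
  let ?N = "{u \<in> verts T. B u \<inter> K \<noteq> {}}"
  let ?R = "(edges T \<inter> ?N \<times> ?N)\<^sup>*"
  have same_vertex: "(u, u') \<in> ?R"
    if "x \<in> K" "u \<in> verts T" "u' \<in> verts T" "x \<in> B u" "x \<in> B u'" for x u u'
  proof -
    have "connected_in T {t \<in> verts T. x \<in> B t}"
      using TD that(1) KV unfolding tree_decomposition_def by blast
    then have "(u, u') \<in> (edges T \<inter> {t \<in> verts T. x \<in> B t} \<times> {t \<in> verts T. x \<in> B t})\<^sup>*"
      using that unfolding connected_in_def by blast
    then show ?thesis by (rule rtrancl_restrict_mono) (use that(1) in auto)
  qed
  fix u1 u2 assume u1: "u1 \<in> ?N" and u2: "u2 \<in> ?N"
  obtain x1 where x1: "x1 \<in> B u1" "x1 \<in> K" using u1 by blast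
  obtain x2 where x2: "x2 \<in> B u2" "x2 \<in> K" using u2 by blast
  have "(x1, x2) \<in> (edges H \<inter> K \<times> K)\<^sup>*" using KC x1 x2 unfolding connected_in_def by blast
  then have "\<forall>u\<in>verts T. x2 \<in> B u \<longrightarrow> (u1, u) \<in> ?R"
  proof (induction rule: rtrancl_induct)
    case base
    then show ?case using same_vertex[of x1 u1] x1 u1 by blast
  next
    case (step x z)
    then have e: "(x, z) \<in> edges H" "x \<in> K" "z \<in> K" by auto
    then obtain u where u: "u \<in> verts T" "x \<in> B u" "z \<in> B u"
      using TD unfolding tree_decomposition_def by blast
    have "(u1, u) \<in> ?R" using step.IH u by blast
    then show ?case using same_vertex[of z u] u e by (meson rtrancl_trans)
  qed
  then show "(u1, u2) \<in> ?R" using u2 x2 by blast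
qed

lemma light_if_disjoint_from_heavy:
  assumes "finite W" "card W < 2 * card (C \<inter> W)" "K \<inter> C = {}"
  shows "2 * card (K \<inter> W) \<le> card W"
proof -
  have "card (K \<inter> W) + card (C \<inter> W) = card ((K \<inter> W) \<union> (C \<inter> W))"
    using assms(1,3) by (subst card_Un_disjoint) auto
  also have "\<dots> \<le> card W" using assms(1) by (intro card_mono) auto
  finally show ?thesis using assms(2) by linarith
qed

lemma tree_step_towards:
  assumes T: "is_tree T" and t: "t \<in> verts T" and N: "N \<subseteq> verts T - {t}" "N \<noteq> {}"
  shows "\<exists>t'. (t, t') \<in> edges T \<and> (\<exists>u\<in>N. (t', u) \<in> (edges T \<inter> (verts T - {t}) \<times> (verts T - {t}))\<^sup>*)"
proof -
  let ?S = "verts T - {t}"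
  have symT: "sym (edges T)" using T is_graph_sym unfolding is_tree_def by blast
  obtain u where u: "u \<in> N" using N(2) by blast
  have "(u, t) \<in> (edges T \<inter> verts T \<times> verts T)\<^sup>*"
    using T t u N(1) unfolding is_tree_def connected_in_def by blast
  then obtain a b where ab: "(u, a) \<in> (edges T \<inter> ?S \<times> ?S)\<^sup>*" "(a, b) \<in> edges T" "b \<in> verts T - ?S"
    using rtrancl_restrict_first_exit[of u t "edges T" "verts T" ?S] u N(1) by blast
  have "(t, a) \<in> edges T" using ab(2,3) symT by (auto dest: symD)
  moreover have "(a, u) \<in> (edges T \<inter> ?S \<times> ?S)\<^sup>*" using rtrancl_restrict_sym[OF symT ab(1)] .
  ultimately show ?thesis using u by blast
qed

lemma tree_edge_separates:
  assumes T: "is_tree T" and e: "(t, t') \<in> edges T" and y: "y \<notin> {t, t'}"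
    and p1: "(t', y) \<in> (edges T \<inter> (verts T - {t}) \<times> (verts T - {t}))\<^sup>*"
    and p2: "(t, y) \<in> (edges T \<inter> (verts T - {t'}) \<times> (verts T - {t'}))\<^sup>*"
  shows False
proof -
  have G: "is_graph T" using T unfolding is_tree_def by blast
  have symT: "sym (edges T)" using G by (rule is_graph_sym)
  let ?S = "verts T - {t, t'}"
  have "t \<noteq> t'" using e is_graph_irrefl[OF G] by blast
  then have "t' \<in> verts T - {t}" using is_graph_edgeD[OF G e] by blast
  then have yS: "y \<in> ?S" using rtrancl_restrict_in[OF p1] y by blast
  obtain a b where a: "(y, a) \<in> (edges T \<inter> ?S \<times> ?S)\<^sup>*" "(a, b) \<in> edges T" "b \<in> (verts T - {t}) - ?S"
    using rtrancl_restrict_first_exit[OF rtrancl_restrict_sym[OF symT p1], of ?S] yS by blast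
  obtain a' b' where a': "(y, a') \<in> (edges T \<inter> ?S \<times> ?S)\<^sup>*" "(a', b') \<in> edges T"
    "b' \<in> (verts T - {t'}) - ?S"
    using rtrancl_restrict_first_exit[OF rtrancl_restrict_sym[OF symT p2], of ?S] yS by blast
  have "(a', a) \<in> (edges T \<inter> ?S \<times> ?S)\<^sup>*"
    using rtrancl_restrict_sym[OF symT a'(1)] a(1) by (rule rtrancl_trans)
  moreover have "a' \<in> ?S" using rtrancl_restrict_in[OF a'(1) yS] .
  moreover have "b = t'" "b' = t" using a(3) a'(3) by blast+
  ultimately have "\<exists>vs. is_cycle T vs"
    using cycle_through_edge[OF G e, of a' a ?S] a(2) a'(2) symT by (auto dest: symD)
  then show False using T unfolding is_tree_def by blast
qed

lemma tree_no_nonbacktracking_successor: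
  assumes T: "is_tree T" and f: "\<And>t. t \<in> verts T \<Longrightarrow> (t, f t) \<in> edges T"
    "\<And>t. t \<in> verts T \<Longrightarrow> f (f t) \<noteq> t"
  shows False
proof -
  have G: "is_graph T" using T unfolding is_tree_def by blast
  obtain t0 where t0: "t0 \<in> verts T" using T unfolding is_tree_def by blast
  define w where "w i = (f ^^ i) t0" for i
  have wV: "w i \<in> verts T" for i
    unfolding w_def by (induction i) (use t0 f(1) is_graph_edgeD[OF G] in auto)
  have "\<exists>vs. is_cycle T vs"
    by (rule cycle_of_nonbacktracking_walk[OF G, of w]) (use wV f in \<open>auto simp: w_def\<close>)
  then show False using T unfolding is_tree_def by blast
qed

text \<open>If no bag were a balanced separator, every node \<open>t\<close> would have a heavy connected set \<open>K t\<close>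
  avoiding its bag, hence a neighbour pointing towards the subtree of nodes meeting \<open>K t\<close>. Heavy sets
  intersect, so two adjacent nodes never point at each other, and following the pointers walks
  forever without backtracking, producing a cycle in the tree.\<close>

lemma tree_decomposition_balanced_bag:
  assumes TD: "tree_decomposition H T B" and W: "finite W"
  shows "\<exists>t\<in>verts T. balanced_separator H W (B t)"
proof (rule ccontr)
  assume "\<not> ?thesis"
  then have "\<forall>t\<in>verts T. \<exists>K. K \<subseteq> verts H - B t \<and> connected_in H K \<and> card W < 2 * card (K \<inter> W)"
    unfolding balanced_separator_def by (auto simp: not_le)
  then obtain K where K: "\<And>t. t \<in> verts T \<Longrightarrow>
      K t \<subseteq> verts H - B t \<and> connected_in H (K t) \<and> card W < 2 * card (K t \<inter> W)"
    by metis
  have T: "is_tree T" using TD unfolding tree_decomposition_def by blast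
  then have GT: "is_graph T" unfolding is_tree_def by blast
  define N where "N t = {u \<in> verts T. B u \<inter> K t \<noteq> {}}" for t
  define Rm where "Rm t = edges T \<inter> (verts T - {t}) \<times> (verts T - {t})" for t
  have N_sub: "N t \<subseteq> verts T - {t}" if "t \<in> verts T" for t
    using K[OF that] unfolding N_def by blast
  have N_reach: "(u, u') \<in> (Rm t)\<^sup>*" if "t \<in> verts T" "u \<in> N t" "u' \<in> N t" for t u u'
  proof -
    have "connected_in T (N t)"
      unfolding N_def using tree_decomposition_nodes_meeting_connected[OF TD] K[OF that(1)] by blast
    then have "(u, u') \<in> (edges T \<inter> N t \<times> N t)\<^sup>*" using that(2,3) unfolding connected_in_def by blast
    then show ?thesis unfolding Rm_def by (rule rtrancl_restrict_mono) (use N_sub[OF that(1)] in auto)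
  qed
  have N_meet: "N t \<inter> N t' \<noteq> {}" if tt': "t \<in> verts T" "t' \<in> verts T" for t t'
  proof -
    have "K t \<inter> K t' \<noteq> {}" using light_if_disjoint_from_heavy[OF W] K tt' by (meson not_le)
    then obtain x where x: "x \<in> K t" "x \<in> K t'" by blast
    then have "x \<in> verts H" using K tt' by blast
    then obtain u where "u \<in> verts T" "x \<in> B u" using TD unfolding tree_decomposition_def by blast
    then show ?thesis using x unfolding N_def by blast
  qed
  have "\<exists>t'. (t, t') \<in> edges T \<and> (\<exists>u\<in>N t. (t', u) \<in> (Rm t)\<^sup>*)" if "t \<in> verts T" for t
    using tree_step_towards[OF T that N_sub[OF that]] N_meet[OF that that] unfolding Rm_def by blast
  then obtain nxt where nxt: "\<And>t. t \<in> verts T \<Longrightarrow> (t, nxt t) \<in> edges T \<and> (\<exists>u\<in>N t. (nxt t, u) \<in> (Rm t)\<^sup>*)"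
    by metis
  show False
  proof (rule tree_no_nonbacktracking_successor[OF T])
    show "(t, nxt t) \<in> edges T" if "t \<in> verts T" for t using nxt[OF that] by blast
    show "nxt (nxt t) \<noteq> t" if t: "t \<in> verts T" for t
    proof
      assume returns: "nxt (nxt t) = t"
      define t' where "t' = nxt t"
      have e: "(t, t') \<in> edges T" using nxt[OF t] unfolding t'_def by blast
      then have t': "t' \<in> verts T" using is_graph_edgeD[OF GT] by blast
      obtain y where y: "y \<in> N t" "y \<in> N t'" using N_meet[OF t t'] by blast
      obtain u1 where "u1 \<in> N t" "(t', u1) \<in> (Rm t)\<^sup>*" using nxt[OF t] unfolding t'_def by blast
      then have p1: "(t', y) \<in> (Rm t)\<^sup>*" using N_reach[OF t _ y(1)] by (meson rtrancl_trans)
      obtain u2 where "u2 \<in> N t'" "(t, u2) \<in> (Rm t')\<^sup>*" using nxt[OF t'] returns unfolding t'_def by auto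
      then have p2: "(t, y) \<in> (Rm t')\<^sup>*" using N_reach[OF t' _ y(2)] by (meson rtrancl_trans)
      have "y \<notin> {t, t'}" using y N_sub t t' by blast
      then show False using tree_edge_separates[OF T e] p1 p2 unfolding Rm_def by blast
    qed
  qed
qed

section \<open>The bipartite double cover\<close>

lemma verts_direct_product_K2: "verts (direct_product G K2) = verts G \<times> UNIV"
  by (simp add: direct_product_def K2_def verts_def)

lemma edges_direct_product_K2:
  "((a, i), (b, j)) \<in> edges (direct_product G K2) \<longleftrightarrow> (a, b) \<in> edges G \<and> i \<noteq> j"
  by (simp add: direct_product_def K2_def edges_def)

lemma is_graph_direct_product_K2: "is_graph G \<Longrightarrow> is_graph (direct_product G K2)"
  unfolding is_graph_iff sym_def verts_direct_product_K2
  by (auto simp: direct_product_def K2_def edges_def verts_def)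

lemma component_involution:
  assumes E: "\<And>x y. (x, y) \<in> E \<Longrightarrow> (f x, f y) \<in> E" and S: "\<And>x. x \<in> S \<Longrightarrow> f x \<in> S"
    and inv: "\<And>x. f (f x) = x"
  shows "component E S (f v) = f ` component E S v"
proof -
  have sub: "f ` component E S w \<subseteq> component E S (f w)" for w
  proof
    fix z assume "z \<in> f ` component E S w"
    then obtain y where y: "z = f y" "y \<in> S" "(w, y) \<in> (E \<inter> S \<times> S)\<^sup>*" unfolding component_def by blast
    have "(f w, f y) \<in> (map_prod f f ` E \<inter> f ` S \<times> f ` S)\<^sup>*" by (rule rtrancl_restrict_image[OF y(3)])
    then have "(f w, f y) \<in> (E \<inter> S \<times> S)\<^sup>*" by (rule rtrancl_restrict_mono) (use E S in auto)
    then show "z \<in> component E S (f w)" using y S unfolding component_def by blast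
  qed
  have "component E S (f v) = f ` f ` component E S (f v)" by (simp add: image_comp inv)
  also have "\<dots> \<subseteq> f ` component E S v" using sub[of "f v"] inv by (simp add: image_mono)
  finally show ?thesis using sub[of v] by blast
qed

lemma double_cover_component_meets_fibres:
  assumes K: "connected_in G K" "k0 \<in> K" "a \<in> K"
  shows "\<exists>i. (a, i) \<in> component (edges (direct_product G K2)) (K \<times> UNIV) (k0, False)"
proof -
  let ?L = "component (edges (direct_product G K2)) (K \<times> UNIV) (k0, False)"
  have "(k0, a) \<in> (edges G \<inter> K \<times> K)\<^sup>*" using K unfolding connected_in_def by blast
  then show ?thesis
  proof (induction rule: rtrancl_induct)
    case base
    show ?case using component_self[of "(k0, False)" "K \<times> UNIV" "edges (direct_product G K2)"] K(2)
      by auto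
  next
    case (step a b)
    then obtain i where "(a, i) \<in> ?L" by blast
    moreover have "(b, \<not> i) \<in> K \<times> UNIV" "((a, i), (b, \<not> i)) \<in> edges (direct_product G K2)"
      using step(2) by (auto simp: edges_direct_product_K2)
    ultimately have "(b, \<not> i) \<in> ?L" by (rule component_closed)
    then show ?case by blast
  qed
qed

text \<open>If the lift of \<open>K\<close> is not connected, the copy of each vertex lying in the component of
  \<open>(k\<^sub>0, False)\<close> is unique and alternates along edges.\<close>

lemma double_cover_connected_or_bipartite:
  assumes G: "is_graph G" and K: "connected_in G K"
  shows "connected_in (direct_product G K2) (K \<times> UNIV) \<or> (\<exists>c :: 'a \<Rightarrow> bool. \<forall>a\<in>K. \<forall>b\<in>K. (a, b) \<in> edges G \<longrightarrow> c a \<noteq> c b)"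
proof (cases "K = {}")
  case False
  then obtain k0 where k0: "k0 \<in> K" by blast
  let ?E = "edges (direct_product G K2)" and ?P = "K \<times> (UNIV :: bool set)"
  define flip where "flip z = (fst z, \<not> snd z)" for z :: "'a \<times> bool"
  define L where "L = component ?E ?P (k0, False)"
  have symE: "sym ?E" using is_graph_direct_product_K2[OF G] by (rule is_graph_sym)
  have flip_L: "component ?E ?P (flip z) = flip ` component ?E ?P z" for z
    by (rule component_involution) (auto simp: flip_def edges_direct_product_K2)
  have lift_edge: "(b, \<not> i) \<in> L" if "(a, i) \<in> L" "(a, b) \<in> edges G" "b \<in> K" for a b i
    using that component_closed[of "(a, i)" ?E ?P "(k0, False)" "(b, \<not> i)"]
    unfolding L_def by (simp add: edges_direct_product_K2)
  have lift: "\<exists>i. (a, i) \<in> L" if "a \<in> K" for a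
    using double_cover_component_meets_fibres[OF K k0 that] unfolding L_def .
  show ?thesis
  proof (cases "\<exists>b\<in>K. (b, False) \<in> L \<and> (b, True) \<in> L")
    case True
    then obtain b where b: "(b, False) \<in> L" "(b, True) \<in> L" by blast
    have "L = component ?E ?P (b, False)" "L = component ?E ?P (b, True)"
      using component_eq[OF symE] b unfolding L_def by metis+
    then have L_flip: "flip ` L = L" using flip_L[of "(b, False)"] by (simp add: flip_def)
    have "?P \<subseteq> L"
    proof
      fix z assume "z \<in> ?P"
      then obtain a i where z: "z = (a, i)" "a \<in> K" by auto
      obtain j where "(a, j) \<in> L" using lift[OF z(2)] by blast
      moreover have "flip (a, j) \<in> L" using L_flip \<open>(a, j) \<in> L\<close> by blast
      ultimately show "z \<in> L" unfolding z flip_def by (cases "i = j") auto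
    qed
    then have "L = ?P" using component_subset[of ?E ?P "(k0, False)"] unfolding L_def by blast
    then show ?thesis using connected_in_component[OF symE] unfolding L_def by metis
  next
    case False
    define c where "c a = ((a, True) \<in> L)" for a
    have own: "(a, c a) \<in> L" if "a \<in> K" for a
      using lift[OF that] unfolding c_def by (metis (full_types))
    have "c a \<noteq> c b" if ab: "a \<in> K" "b \<in> K" "(a, b) \<in> edges G" for a b
    proof
      assume "c a = c b"
      then have "(b, \<not> c b) \<in> L" using lift_edge[OF own[OF ab(1)] ab(3,2)] by simp
      then have "(b, False) \<in> L \<and> (b, True) \<in> L" using own[OF ab(2)] by (cases "c b") auto
      then show False using False ab(2) by blast
    qed
    then show ?thesis by blast
  qed
qed (simp add: connected_in_def)

lemma connected_in_section:
  assumes c: "\<forall>a\<in>C. \<forall>b\<in>C. (a, b) \<in> edges G \<longrightarrow> c a \<noteq> c b" and "K \<subseteq> C" "connected_in G K"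
  shows "connected_in (direct_product G K2) ((\<lambda>a. (a, c a)) ` K)"
proof -
  let ?f = "\<lambda>a. (a, c a)"
  have "connected_in (verts G, edges G \<inter> K \<times> K) K" using assms(3) unfolding connected_in_def by simp
  then have "connected_in (UNIV, map_prod ?f ?f ` (edges G \<inter> K \<times> K)) (?f ` K)"
    by (rule connected_in_image)
  moreover have "map_prod ?f ?f ` (edges G \<inter> K \<times> K) \<subseteq> edges (direct_product G K2)"
  proof
    fix e assume "e \<in> map_prod ?f ?f ` (edges G \<inter> K \<times> K)"
    then obtain x y where e: "e = (?f x, ?f y)" "(x, y) \<in> edges G" "x \<in> K" "y \<in> K" by auto
    then have "c x \<noteq> c y" using c assms(2) by blast
    then show "e \<in> edges (direct_product G K2)" using e by (simp add: edges_direct_product_K2)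
  qed
  ultimately show ?thesis
    using connected_in_mono_edges[of "(UNIV, map_prod ?f ?f ` (edges G \<inter> K \<times> K))"] by simp
qed

lemma heavy_component:
  assumes G: "is_graph G" and W: "finite W" and unbalanced: "\<not> balanced_separator G W X"
  obtains C where "C \<subseteq> verts G - X" "connected_in G C" "card W < 2 * card (C \<inter> W)"
    "\<And>K. connected_in G K \<Longrightarrow> K \<subseteq> verts G - X \<Longrightarrow> K \<inter> C \<noteq> {} \<Longrightarrow> K \<subseteq> C"
proof -
  obtain K0 where K0: "K0 \<subseteq> verts G - X" "connected_in G K0" "card W < 2 * card (K0 \<inter> W)"
    using unbalanced unfolding balanced_separator_def by (auto simp: not_le)
  then obtain k0 where k0: "k0 \<in> K0" by (metis card.empty disjoint_iff mult_0_right not_less0)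
  define C where "C = component (edges G) (verts G - X) k0"
  have "K0 \<subseteq> C"
    using component_maximal[OF K0(2,1) k0] component_self[of k0] k0 K0(1) unfolding C_def by blast
  then have "card (K0 \<inter> W) \<le> card (C \<inter> W)" using W by (intro card_mono) auto
  then have heavy: "card W < 2 * card (C \<inter> W)" using K0(3) by linarith
  have sub: "C \<subseteq> verts G - X" using component_subset[of "edges G" "verts G - X" k0] unfolding C_def .
  have conn: "connected_in G C" using connected_in_component[OF is_graph_sym[OF G]] unfolding C_def .
  have maximal: "K \<subseteq> C" if "connected_in G K" "K \<subseteq> verts G - X" "K \<inter> C \<noteq> {}" for K
    using component_maximal[OF that(1,2)] that(3) unfolding C_def by blast
  show ?thesis by (rule that[OF sub conn heavy maximal])
qed

lemma unbalanced_if_lift_connected: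
  assumes Y: "balanced_separator (direct_product G K2) (W \<times> {False}) Y"
    and conn: "connected_in (direct_product G K2) (C \<times> UNIV)" and C: "C \<subseteq> verts G - fst ` Y"
  shows "2 * card (C \<inter> W) \<le> card W"
proof -
  have "C \<times> UNIV \<subseteq> verts (direct_product G K2) - Y"
    using C unfolding verts_direct_product_K2 by force
  then have "2 * card ((C \<times> UNIV) \<inter> (W \<times> {False})) \<le> card (W \<times> {False})"
    using Y conn unfolding balanced_separator_def by blast
  moreover have "(C \<times> UNIV) \<inter> (W \<times> {False}) = (C \<inter> W) \<times> {False}" by auto
  ultimately show ?thesis by (simp add: card_cartesian_product)
qed

text \<open>Inside a 2-coloured component \<open>C\<close>, connected sets lift isomorphically to the double cover, so a
  separator there for the lifted \<open>W \<inter> C\<close> projects to one for \<open>W\<close>; connected sets outside \<open>C\<close> are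
  light because \<open>C\<close> is heavy.\<close>

lemma balanced_separator_of_section:
  assumes W: "finite W" and heavy: "card W < 2 * card (C \<inter> W)"
    and maximal: "\<And>K. connected_in G K \<Longrightarrow> K \<subseteq> verts G - X \<Longrightarrow> K \<inter> C \<noteq> {} \<Longrightarrow> K \<subseteq> C"
    and c: "\<forall>a\<in>C. \<forall>b\<in>C. (a, b) \<in> edges G \<longrightarrow> c a \<noteq> c b"
    and Y: "balanced_separator (direct_product G K2) ((\<lambda>a. (a, c a)) ` (C \<inter> W)) Y"
  shows "balanced_separator G W (X \<union> fst ` Y)"
  unfolding balanced_separator_def
proof (intro allI impI)
  fix K assume KV: "K \<subseteq> verts G - (X \<union> fst ` Y)" and KC: "connected_in G K"
  let ?sec = "\<lambda>a. (a, c a)"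
  have inj: "inj_on ?sec A" for A by (simp add: inj_on_def)
  show "2 * card (K \<inter> W) \<le> card W"
  proof (cases "K \<inter> C = {}")
    case True
    then show ?thesis by (rule light_if_disjoint_from_heavy[OF W heavy])
  next
    case False
    then have "K \<subseteq> C" using maximal[OF KC] KV by blast
    then have "connected_in (direct_product G K2) (?sec ` K)" using connected_in_section[OF c _ KC] by blast
    moreover have "?sec ` K \<subseteq> verts (direct_product G K2) - Y"
      using KV unfolding verts_direct_product_K2 by force
    ultimately have "2 * card (?sec ` K \<inter> ?sec ` (C \<inter> W)) \<le> card (?sec ` (C \<inter> W))"
      using Y unfolding balanced_separator_def by blast
    moreover have "?sec ` K \<inter> ?sec ` (C \<inter> W) = ?sec ` (K \<inter> W)" using \<open>K \<subseteq> C\<close> by auto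
    moreover have "card (C \<inter> W) \<le> card W" using W by (intro card_mono) auto
    ultimately show ?thesis using card_image[OF inj] by (metis le_trans)
  qed
qed

lemma has_balanced_separators_of_double_cover:
  assumes G: "is_graph G" and TD: "tree_decomposition (direct_product G K2) T B"
    and bags: "\<forall>t\<in>verts T. card (B t) \<le> m"
  shows "has_balanced_separators G (2 * m)"
  unfolding has_balanced_separators_def
proof (intro allI impI)
  fix W assume WV: "W \<subseteq> verts G"
  have finV: "finite (verts G)" using G unfolding is_graph_iff by simp
  have finW: "finite W" using finite_subset[OF WV finV] .
  have proj: "fst ` B t \<subseteq> verts G \<and> card (fst ` B t) \<le> m" if "t \<in> verts T" for t
  proof -
    have "B t \<subseteq> verts G \<times> UNIV"
      using TD that unfolding tree_decomposition_def verts_direct_product_K2 by blast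
    moreover then have "finite (B t)" using finV by (auto intro: finite_subset)
    ultimately show ?thesis using bags that card_image_le[of "B t" fst] by fastforce
  qed
  obtain t1 where t1: "t1 \<in> verts T" "balanced_separator (direct_product G K2) (W \<times> {False}) (B t1)"
    using tree_decomposition_balanced_bag[OF TD, of "W \<times> {False}"] finW by blast
  show "\<exists>X\<subseteq>verts G. card X \<le> 2 * m \<and> balanced_separator G W X"
  proof (cases "balanced_separator G W (fst ` B t1)")
    case True
    then show ?thesis using proj[OF t1(1)] by auto
  next
    case False
    obtain C where C: "C \<subseteq> verts G - fst ` B t1" "connected_in G C" "card W < 2 * card (C \<inter> W)"
      and maximal: "\<And>K. connected_in G K \<Longrightarrow> K \<subseteq> verts G - fst ` B t1 \<Longrightarrow> K \<inter> C \<noteq> {} \<Longrightarrow> K \<subseteq> C"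
      using heavy_component[OF G finW False] by blast
    then have "\<not> connected_in (direct_product G K2) (C \<times> UNIV)"
      using unbalanced_if_lift_connected[OF t1(2)] by fastforce
    then obtain c :: "'a \<Rightarrow> bool" where c: "\<forall>a\<in>C. \<forall>b\<in>C. (a, b) \<in> edges G \<longrightarrow> c a \<noteq> c b"
      using double_cover_connected_or_bipartite[OF G C(2)] by blast
    obtain t2 where t2: "t2 \<in> verts T"
      "balanced_separator (direct_product G K2) ((\<lambda>a. (a, c a)) ` (C \<inter> W)) (B t2)"
      using tree_decomposition_balanced_bag[OF TD] finW by blast
    have "balanced_separator G W (fst ` B t1 \<union> fst ` B t2)"
      by (rule balanced_separator_of_section[OF finW C(3) maximal c t2(2)])
    moreover have "card (fst ` B t1 \<union> fst ` B t2) \<le> 2 * m"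
      using proj[OF t1(1)] proj[OF t2(1)] card_Un_le[of "fst ` B t1" "fst ` B t2"] by linarith
    moreover have "fst ` B t1 \<union> fst ` B t2 \<subseteq> verts G" using proj[OF t1(1)] proj[OF t2(1)] by blast
    ultimately show ?thesis by blast
  qed
qed

section \<open>Treewidth\<close>

lemma bag_card_le_width:
  assumes "tree_decomposition G T B" "t \<in> verts T"
  shows "card (B t) \<le> decomp_width T B + 1"
proof -
  have "finite (verts T)"
    using assms(1) unfolding tree_decomposition_def is_tree_def is_graph_iff by blast
  then have "card (B t) \<le> Max ((\<lambda>t. card (B t)) ` verts T)" using assms(2) by (intro Max_ge) auto
  then show ?thesis unfolding decomp_width_def by linarith
qed

lemma treewidth_le:
  assumes TD: "tree_decomposition G T B" and bags: "\<forall>X\<in>B ` verts T. card X \<le> k + 1"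
  shows "treewidth G \<le> k"
proof -
  have "finite (verts T)" "verts T \<noteq> {}"
    using TD unfolding tree_decomposition_def is_tree_def is_graph_iff by blast+
  then have "Max ((\<lambda>t. card (B t)) ` verts T) \<le> k + 1" using bags by (subst Max_le_iff) auto
  then have "decomp_width T B \<le> k" unfolding decomp_width_def by linarith
  moreover have "treewidth G \<le> decomp_width T B"
    unfolding treewidth_def by (rule Least_le) (use TD in blast)
  ultimately show ?thesis by simp
qed

lemma treewidth_witness:
  assumes "is_graph G"
  obtains T B where "tree_decomposition G T B" "decomp_width T B = treewidth G"
proof -
  have "tree_decomposition G ({0}, {}) (\<lambda>_. verts G)"
    using tree_decomposition_single_bag[of G "verts G" 0] induced_verts[OF assms] by simp
  then have "\<exists>w T B. tree_decomposition G T B \<and> decomp_width T B = w" by blast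
  from LeastI_ex[OF this] show ?thesis using that unfolding treewidth_def by blast
qed

theorem treewidth_le_double_cover:
  assumes G: "is_graph G"
  shows "treewidth G \<le> 8 * treewidth (direct_product G K2) + 8"
proof -
  let ?w = "treewidth (direct_product G K2)"
  obtain T B where TD: "tree_decomposition (direct_product G K2) T B" "decomp_width T B = ?w"
    using treewidth_witness[OF is_graph_direct_product_K2[OF G]] by blast
  then have sep: "has_balanced_separators G (2 * (?w + 1))"
    using has_balanced_separators_of_double_cover[OF G TD(1)] bag_card_le_width by metis
  have "decomposable G (4 * (2 * (?w + 1)) + 1) (verts G) {}"
    by (rule decomposable_from_separators[OF G sep]) (use is_graph_edgeD[OF G] in auto)
  then obtain T' B' where "tree_decomposition (induced G (verts G)) T' B'"
      "\<forall>X\<in>B' ` verts T'. card X \<le> 4 * (2 * (?w + 1)) + 1"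
    unfolding decomposable_def by blast
  then show ?thesis using induced_verts[OF G] treewidth_le[of G T' B' "8 * ?w + 8"] by simp
qed

lemma ln_powr_five_halves_ge:
  assumes "(2::real) \<le> x"
  shows "1 / 8 \<le> ln x powr (5 / 2)"
proof -
  have "ln (1 / 2) \<le> 1 / 2 - (1::real)" by (rule ln_le_minus_one) simp
  then have "1 / 2 \<le> ln (2::real)" by (simp add: ln_div)
  also have "\<dots> \<le> ln x" using assms by simp
  finally have half: "1 / 2 \<le> ln x" .
  have "1 / 8 = (1 / 2 :: real) powr 3" by (simp add: powr_numeral power3_eq_cube)
  also have "\<dots> \<le> (1 / 2) powr (5 / 2)" by (rule powr_mono') simp_all
  also have "\<dots> \<le> ln x powr (5 / 2)" using half by (intro powr_mono2) simp_all
  finally show ?thesis .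
qed

theorem mainTheorem15:
  shows "\<exists>c::real. c > 0 \<and>
    (\<forall>(k::nat) (G::nat graph). k \<ge> 2 \<longrightarrow> is_graph G \<longrightarrow>
       real (treewidth G) \<ge> c * real k ^ 4 * ln (real k) powr (5/2) \<longrightarrow>
       treewidth (direct_product G K2) \<ge> k)"
proof (intro exI[of _ 64] conjI allI impI)
  fix k :: nat and G :: "nat graph"
  assume k: "k \<ge> 2" and G: "is_graph G"
    and tw: "real (treewidth G) \<ge> 64 * real k ^ 4 * ln (real k) powr (5/2)"
  show "treewidth (direct_product G K2) \<ge> k"
  proof (rule ccontr)
    assume "\<not> ?thesis"
    then have "real (treewidth G) \<le> 8 * real k" using treewidth_le_double_cover[OF G] by linarith
    moreover have "64 * real k ^ 4 * (1 / 8) \<le> 64 * real k ^ 4 * ln (real k) powr (5/2)"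
      using ln_powr_five_halves_ge[of "real k"] k by (intro mult_left_mono) auto
    ultimately have "real k ^ 4 \<le> real k" using tw by linarith
    then have "real k * real k ^ 3 \<le> real k * 1" by (simp add: power4_eq_xxxx power3_eq_cube)
    then have "real k ^ 3 \<le> 1" using k by (simp only: mult_le_cancel_left_pos)
    moreover have "(2::real) ^ 3 \<le> real k ^ 3" using k by (intro power_mono) auto
    ultimately show False by simp
  qed
qed simp

end
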